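(* Let $D_K$ be a relative $K$-entropy satisfying Properties (a), (b), (c) and (d) below, and let $H_K$ be the associated conditional entropy, defined by one of the two forms below. Let $X=\{X_j\}$ be an arbitrary POVM on $\mathcal{H}_A$. Then for every density operator $\rho_{AB}$, $$H_K(X|B)\ge\log\frac{1}{c(X)},\qquad c(X):=\max_j\|X_j\|_\infty .$$
   Context: All Hilbert spaces are finite-dimensional; $\log$ has an arbitrary but fixed base; $\|\cdot\|_\infty$ is the largest singular value. A relative $K$-entropy $D_K$ assigns to every pair $(S,T)$ of positive semidefinite operators on a common Hilbert space an extended real number $D_K(S\|T)$. Properties: (a) for every trace-preserving completely positive map (TPCPM) $\mathcal{E}$ (possibly between different spaces), $D_K(\mathcal{E}(S)\|\mathcal{E}(T))\le D_K(S\|T)$; (b) for positive semidefinite $S,T$ on $\mathcal{H}$ and $T'$ on $\mathcal{H}'$, $D_K(S\oplus 0\,\|\,T\oplus T')=D_K(S\|T)$; (c) for every constant $c>0$, $D_K(S\|cT)=D_K(S\|T)+\log\frac1c$; (d) $D_K(\rho\|\rho)=0$ for every density operator $\rho$. The conditional $K$-entropy of a density operator $\rho_{AB}$ is either $H_K(A|B)=-D_K(\rho_{AB}\|\mathbb{1}_A\otimes\rho_B)$ for all $\rho_{AB}$, or $H_K(A|B)=\max_{\sigma_B}[-D_K(\rho_{AB}\|\mathbb{1}_A\otimes\sigma_B)]$ for all $\rho_{AB}$, maximum over density operators $\sigma_B$. For a POVM $X=\{X_j\}$ on $\mathcal{H}_A$, let $\mathcal{X}:\rho_A\mapsto\sum_j|j\rangle\langle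 j|_X\,\mathrm{Tr}(X_j\rho_A)$ with $\{|j\rangle\}$ orthonormal in a register $\mathcal{H}_X$; $H_K(X|B)$ denotes $H_K$ of the state $(\mathcal{X}\otimes\mathcal{I})(\rho_{AB})$ (register $X$ given $B$). *)

theory Defs
  imports "HOL-Analysis.Analysis" "Jordan_Normal_Form.Matrix" "Jordan_Normal_Form.Char_Poly"
begin

definition dagger :: "complex mat \<Rightarrow> complex mat" where
  "dagger A = mat (dim_col A) (dim_row A) (\<lambda>(i,j). cnj (A $$ (j,i)))"

definition mtr :: "complex mat \<Rightarrow> complex" where
  "mtr A = (\<Sum>i<dim_row A. A $$ (i,i))"

definition cinner :: "complex vec \<Rightarrow> complex vec \<Rightarrow> complex" where
  "cinner v w = (\<Sum>i<dim_vec v. cnj (v $ i) * w $ i)"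

definition psd :: "nat \<Rightarrow> complex mat \<Rightarrow> bool" where
  "psd n A \<longleftrightarrow> A \<in> carrier_mat n n \<and> dagger A = A \<and>
     (\<forall>v \<in> carrier_vec n. Im (cinner v (A *\<^sub>v v)) = 0 \<and> 0 \<le> Re (cinner v (A *\<^sub>v v)))"

definition density :: "nat \<Rightarrow> complex mat \<Rightarrow> bool" where
  "density n \<rho> \<longleftrightarrow> psd n \<rho> \<and> mtr \<rho> = 1"

text \<open>Kronecker (tensor) product; index (i,k) of A \<otimes> B is i * dim B + k.\<close>
definition kron :: "complex mat \<Rightarrow> complex mat \<Rightarrow> complex mat" where
  "kron A B = mat (dim_row A * dim_row B) (dim_col A * dim_col B)
     (\<lambda>(i,j). A $$ (i div dim_row B, j div dim_col B) * B $$ (i mod dim_row B, j mod dim_col B))"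

definition dsum :: "complex mat \<Rightarrow> complex mat \<Rightarrow> complex mat" where
  "dsum S T = four_block_mat S (0\<^sub>m (dim_row S) (dim_col T)) (0\<^sub>m (dim_row T) (dim_col S)) T"

text \<open>Block (b,b') of an operator on H_1 \<otimes> H_2 (dims n and d): the n x n operator
  with entries <a,b| R |a',b'>.\<close>
definition blk :: "nat \<Rightarrow> nat \<Rightarrow> complex mat \<Rightarrow> nat \<Rightarrow> nat \<Rightarrow> complex mat" where
  "blk n d R b b' = mat n n (\<lambda>(a,a'). R $$ (a * d + b, a' * d + b'))"

text \<open>(E \<otimes> id_d)(R) for a linear map E from n x n to m x m operators.\<close>
definition tensor_id :: "(complex mat \<Rightarrow> complex mat) \<Rightarrow> nat \<Rightarrow> nat \<Rightarrow> nat \<Rightarrow> complex mat \<Rightarrow> complex mat" where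
  "tensor_id E n m d R = mat (m * d) (m * d)
     (\<lambda>(i,j). E (blk n d R (i mod d) (j mod d)) $$ (i div d, j div d))"

definition ptrA :: "nat \<Rightarrow> nat \<Rightarrow> complex mat \<Rightarrow> complex mat" where
  "ptrA dA dB R = mat dB dB (\<lambda>(b,b'). \<Sum>a<dA. R $$ (a * dB + b, a * dB + b'))"

definition tpcpm :: "nat \<Rightarrow> nat \<Rightarrow> (complex mat \<Rightarrow> complex mat) \<Rightarrow> bool" where
  "tpcpm n m E \<longleftrightarrow>
     (\<forall>A \<in> carrier_mat n n. E A \<in> carrier_mat m m) \<and>
     (\<forall>A \<in> carrier_mat n n. \<forall>B \<in> carrier_mat n n. E (A + B) = E A + E B) \<and>
     (\<forall>A \<in> carrier_mat n n. \<forall>c. E (c \<cdot>\<^sub>m A) = c \<cdot>\<^sub>m E A) \<and>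
     (\<forall>A \<in> carrier_mat n n. mtr (E A) = mtr A) \<and>
     (\<forall>k P. psd (n * k) P \<longrightarrow> psd (m * k) (tensor_id E n m k P))"

definition rel_K_entropy :: "real \<Rightarrow> (complex mat \<Rightarrow> complex mat \<Rightarrow> ereal) \<Rightarrow> bool" where
  "rel_K_entropy b D \<longleftrightarrow>
     (\<forall>n m E S T. tpcpm n m E \<and> psd n S \<and> psd n T \<longrightarrow> D (E S) (E T) \<le> D S T) \<and>
     (\<forall>n n' S T T'. psd n S \<and> psd n T \<and> psd n' T' \<longrightarrow>
         D (dsum S (0\<^sub>m n' n')) (dsum T T') = D S T) \<and>
     (\<forall>n S T c. psd n S \<and> psd n T \<and> c > 0 \<longrightarrow>
         D S (complex_of_real c \<cdot>\<^sub>m T) = D S T + ereal (log b (1 / c))) \<and>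
     (\<forall>n \<rho>. density n \<rho> \<longrightarrow> D \<rho> \<rho> = 0)"

definition H_K1 :: "(complex mat \<Rightarrow> complex mat \<Rightarrow> ereal) \<Rightarrow> nat \<Rightarrow> nat \<Rightarrow> complex mat \<Rightarrow> ereal" where
  "H_K1 D dA dB \<rho> = - D \<rho> (kron (1\<^sub>m dA) (ptrA dA dB \<rho>))"

definition H_K2 :: "(complex mat \<Rightarrow> complex mat \<Rightarrow> ereal) \<Rightarrow> nat \<Rightarrow> nat \<Rightarrow> complex mat \<Rightarrow> ereal" where
  "H_K2 D dA dB \<rho> = (SUP \<sigma> \<in> {\<sigma>. density dB \<sigma>}. - D \<rho> (kron (1\<^sub>m dA) \<sigma>))"

definition povm :: "nat \<Rightarrow> complex mat list \<Rightarrow> bool" where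
  "povm n Xs \<longleftrightarrow> (\<forall>X \<in> set Xs. psd n X) \<and>
     mat n n (\<lambda>ij. \<Sum>j<length Xs. (Xs ! j) $$ ij) = 1\<^sub>m n"

definition meas_map :: "complex mat list \<Rightarrow> complex mat \<Rightarrow> complex mat" where
  "meas_map Xs \<rho> = mat (length Xs) (length Xs)
     (\<lambda>(i,j). if i = j then mtr (Xs ! i * \<rho>) else 0)"

definition smax :: "complex mat \<Rightarrow> real" where
  "smax A = Max ((\<lambda>k. sqrt (Re k)) ` Collect (eigenvalue (dagger A * A)))"

definition cX :: "complex mat list \<Rightarrow> real" where
  "cX Xs = Max (smax ` set Xs)"

end

(* Let R = (X \<otimes> id)(\<rho>) = \<Sum>_j |j><j| \<otimes> tr_A ((X_j \<otimes> 1) \<rho>) be the post-measurement state and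
   \<sigma> = tr_A \<rho> = tr_X R.  Since X_j \<le> c(X) 1 and \<rho> \<ge> 0, each block satisfies
   tr_A ((X_j \<otimes> 1) \<rho>) \<le> c(X) \<sigma>, i.e. R \<le> c(X) (1 \<otimes> \<sigma>).  A relative K-entropy is antitone in
   its second argument: D(S || T') = D(S \<oplus> 0 || T \<oplus> (T' - T)) after the channel adding the
   two diagonal blocks.  Hence D(R || 1 \<otimes> \<sigma>) \<le> D(R || R / c(X)) = D(R || R) + log c(X) = log c(X),
   which is the bound for the first form of H_K; the second form is a supremum over
   states \<sigma>_B that includes \<sigma>.  Positivity of tr_A ((Y \<otimes> 1) \<rho>) for psd Y comes from writing Y as
   a sum of rank-one terms y y\<^sup>*, obtained by Gaussian elimination on the diagonal. *)

theory Submission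
  imports Defs "Jordan_Normal_Form.Spectral_Radius"
begin

section \<open>Sesquilinear forms of entry functions\<close>

definition sesq :: "nat \<Rightarrow> (nat \<Rightarrow> nat \<Rightarrow> complex) \<Rightarrow> (nat \<Rightarrow> complex) \<Rightarrow> (nat \<Rightarrow> complex) \<Rightarrow> complex"
  where "sesq n M u v = (\<Sum>i<n. \<Sum>j<n. cnj (u i) * M i j * v j)"

definition herm_on :: "nat \<Rightarrow> (nat \<Rightarrow> nat \<Rightarrow> complex) \<Rightarrow> bool"
  where "herm_on n M \<longleftrightarrow> (\<forall>i<n. \<forall>j<n. M j i = cnj (M i j))"

definition psd_on :: "nat \<Rightarrow> (nat \<Rightarrow> nat \<Rightarrow> complex) \<Rightarrow> bool"
  where "psd_on n M \<longleftrightarrow> herm_on n M \<and> (\<forall>v. 0 \<le> sesq n M v v)"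

definition sqnorm :: "nat \<Rightarrow> (nat \<Rightarrow> complex) \<Rightarrow> real"
  where "sqnorm n w = (\<Sum>i<n. (cmod (w i))\<^sup>2)"

definition basis_fn :: "nat \<Rightarrow> nat \<Rightarrow> complex"
  where "basis_fn k i = (if i = k then 1 else 0)"

abbreviation entries :: "complex mat \<Rightarrow> nat \<Rightarrow> nat \<Rightarrow> complex"
  where "entries A \<equiv> \<lambda>i j. A $$ (i,j)"

abbreviation id_entries :: "nat \<Rightarrow> nat \<Rightarrow> complex"
  where "id_entries \<equiv> \<lambda>i j. if i = j then 1 else 0"

lemma herm_onD: "herm_on n M \<Longrightarrow> i < n \<Longrightarrow> j < n \<Longrightarrow> M j i = cnj (M i j)"
  unfolding herm_on_def by blast

lemma psd_onD:
  assumes "psd_on n M"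
  shows "herm_on n M" and "0 \<le> sesq n M v v"
  using assms unfolding psd_on_def by auto

lemma sum_lessThan_add: "(\<Sum>i<(m::nat) + k. f i) = (\<Sum>i<m. f i) + (\<Sum>i<k. f (m + i))"
  by (induction k) (simp_all add: add.assoc)

lemma sum_lessThan_mult: "(\<Sum>i<(n::nat) * d. f i) = (\<Sum>a<n. \<Sum>b<d. f (a * d + b))"
proof (induction n)
  case (Suc n)
  have "(\<Sum>i<Suc n * d. f i) = (\<Sum>i<n * d + d. f i)"
    by (simp add: add.commute)
  then show ?case
    using Suc by (simp add: sum_lessThan_add)
qed simp

lemma mult_add_less_mult:
  assumes "a < n" and "b < d"
  shows "a * d + b < n * (d::nat)"
proof -
  have "a * d + b < Suc a * d"
    using assms by simp
  also have "\<dots> \<le> n * d"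
    using assms by (intro mult_le_mono1) simp
  finally show ?thesis .
qed

lemma sesq_cong:
  assumes "\<And>i j. i < n \<Longrightarrow> j < n \<Longrightarrow> M i j = M' i j"
    and "\<And>i. i < n \<Longrightarrow> u i = u' i" and "\<And>i. i < n \<Longrightarrow> v i = v' i"
  shows "sesq n M u v = sesq n M' u' v'"
  unfolding sesq_def using assms by (intro sum.cong refl) auto

lemma sesq_mult_vec: "sesq n M u v = (\<Sum>i<n. cnj (u i) * (\<Sum>j<n. M i j * v j))"
  unfolding sesq_def by (simp add: sum_distrib_left mult.assoc)

lemma sesq_add_left: "sesq n M (\<lambda>i. u i + w i) v = sesq n M u v + sesq n M w v"
  unfolding sesq_def by (simp add: algebra_simps sum.distrib)

lemma sesq_add_right: "sesq n M u (\<lambda>i. v i + w i) = sesq n M u v + sesq n M u w"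
  unfolding sesq_def by (simp add: algebra_simps sum.distrib)

lemma sesq_scale_left: "sesq n M (\<lambda>i. c * u i) v = cnj c * sesq n M u v"
  unfolding sesq_def by (simp add: algebra_simps sum_distrib_left)

lemma sesq_scale_right: "sesq n M u (\<lambda>i. c * v i) = c * sesq n M u v"
  unfolding sesq_def by (simp add: algebra_simps sum_distrib_left)

lemma sesq_expand:
  "sesq n M (\<lambda>k. u k + c * w k) (\<lambda>k. u k + c * w k)
     = sesq n M u u + (c * sesq n M u w + cnj c * sesq n M w u + cnj c * c * sesq n M w w)"
  by (simp add: sesq_add_left sesq_add_right sesq_scale_left sesq_scale_right algebra_simps)

lemma sesq_diff_mat: "sesq n (\<lambda>i j. A i j - B i j) u v = sesq n A u v - sesq n B u v"
  unfolding sesq_def by (simp add: algebra_simps sum_subtractf)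

lemma sesq_scale_mat: "sesq n (\<lambda>i j. k * M i j) u v = k * sesq n M u v"
  unfolding sesq_def by (simp add: sum_distrib_left algebra_simps)

lemma sesq_sum_list_mat: "sesq n (\<lambda>i j. \<Sum>y\<leftarrow>ys. F y i j) u v = (\<Sum>y\<leftarrow>ys. sesq n (F y) u v)"
  by (induction ys) (simp_all add: sesq_def algebra_simps sum.distrib)

lemma sesq_swap:
  assumes "herm_on n M"
  shows "sesq n M u v = cnj (sesq n M v u)"
proof -
  have "cnj (sesq n M v u) = (\<Sum>i<n. \<Sum>j<n. cnj (u j) * M j i * v i)"
    unfolding sesq_def cnj_sum
  proof (intro sum.cong refl)
    fix i j
    assume "i \<in> {..<n}" and "j \<in> {..<n}"
    then have "M j i = cnj (M i j)"
      using herm_onD[OF assms, of i j] by simp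
    then show "cnj (cnj (v i) * M i j * u j) = cnj (u j) * M j i * v i"
      by simp
  qed
  also have "\<dots> = sesq n M u v"
    unfolding sesq_def by (rule sum.swap)
  finally show ?thesis
    by simp
qed

lemma sesq_diag_real: "herm_on n M \<Longrightarrow> of_real (Re (sesq n M w w)) = sesq n M w w"
  using sesq_swap[of n M w w] by (metis Reals_cnj_iff complex_is_Real_iff of_real_Re)

lemma cinner_mult_mat_vec:
  assumes "A \<in> carrier_mat n n" and "v \<in> carrier_vec n"
  shows "cinner v (A *\<^sub>v v) = sesq n (entries A) (\<lambda>i. v $ i) (\<lambda>i. v $ i)"
  unfolding cinner_def sesq_mult_vec using assms
  by (intro sum.cong) (auto simp: scalar_prod_def atLeast0LessThan)

lemma psd_iff_psd_on: "psd n A \<longleftrightarrow> A \<in> carrier_mat n n \<and> psd_on n (entries A)"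
proof
  assume psd: "psd n A"
  then have A: "A \<in> carrier_mat n n" and "dagger A = A"
    and form: "\<And>v. v \<in> carrier_vec n \<Longrightarrow> Im (cinner v (A *\<^sub>v v)) = 0 \<and> 0 \<le> Re (cinner v (A *\<^sub>v v))"
    unfolding psd_def by auto
  have "herm_on n (entries A)"
    unfolding herm_on_def
  proof (intro allI impI)
    fix i j
    assume "i < n" and "j < n"
    then have "A $$ (j,i) = dagger A $$ (j,i)"
      using \<open>dagger A = A\<close> by simp
    also have "\<dots> = cnj (A $$ (i,j))"
      using A \<open>i < n\<close> \<open>j < n\<close> by (simp add: dagger_def)
    finally show "A $$ (j,i) = cnj (A $$ (i,j))" .
  qed
  moreover have "0 \<le> sesq n (entries A) v v" for v
  proof -
    have "sesq n (entries A) v v = cinner (vec n v) (A *\<^sub>v vec n v)"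
      using cinner_mult_mat_vec[OF A, of "vec n v"] by (auto intro: sesq_cong)
    then show ?thesis
      using form[of "vec n v"] by (simp add: less_eq_complex_def)
  qed
  ultimately show "A \<in> carrier_mat n n \<and> psd_on n (entries A)"
    using A unfolding psd_on_def by auto
next
  assume "A \<in> carrier_mat n n \<and> psd_on n (entries A)"
  then have A: "A \<in> carrier_mat n n" and herm: "herm_on n (entries A)"
    and form: "\<And>v. 0 \<le> sesq n (entries A) v v"
    unfolding psd_on_def by auto
  have "dagger A = A"
  proof (rule eq_matI)
    fix i j
    assume "i < dim_row A" and "j < dim_col A"
    then have "A $$ (i,j) = cnj (A $$ (j,i))"
      using A herm_onD[OF herm, of j i] by simp
    then show "dagger A $$ (i,j) = A $$ (i,j)"
      using A \<open>i < dim_row A\<close> \<open>j < dim_col A\<close> by (simp add: dagger_def)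
  qed (use A in \<open>auto simp: dagger_def\<close>)
  moreover have "Im (cinner v (A *\<^sub>v v)) = 0 \<and> 0 \<le> Re (cinner v (A *\<^sub>v v))" if "v \<in> carrier_vec n" for v
    using form[of "\<lambda>i. v $ i"] cinner_mult_mat_vec[OF A that] by (auto simp: less_eq_complex_def)
  ultimately show "psd n A"
    using A unfolding psd_def by auto
qed

lemma psd_on_cong:
  assumes "\<And>i j. i < n \<Longrightarrow> j < n \<Longrightarrow> M i j = M' i j" and "psd_on n M"
  shows "psd_on n M'"
proof -
  have "herm_on n M'"
    unfolding herm_on_def
  proof (intro allI impI)
    fix i j
    assume "i < n" and "j < n"
    then show "M' j i = cnj (M' i j)"
      using herm_onD[OF psd_onD(1)[OF assms(2)]] assms(1) by metis
  qed
  moreover have "sesq n M' u u = sesq n M u u" for u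
    using assms(1) by (intro sesq_cong) auto
  ultimately show ?thesis
    using psd_onD(2)[OF assms(2)] unfolding psd_on_def by auto
qed

lemma psd_on_scale:
  assumes "psd_on n M" and "k \<ge> 0"
  shows "psd_on n (\<lambda>i j. of_real k * M i j)"
proof -
  have "herm_on n (\<lambda>i j. of_real k * M i j)"
    unfolding herm_on_def
  proof (intro allI impI)
    fix i j
    assume "i < n" and "j < n"
    then have "M j i = cnj (M i j)"
      by (rule herm_onD[OF psd_onD(1)[OF assms(1)]])
    then show "of_real k * M j i = cnj (of_real k * M i j)"
      by simp
  qed
  moreover have "0 \<le> sesq n (\<lambda>i j. of_real k * M i j) v v" for v
    unfolding sesq_scale_mat using psd_onD(2)[OF assms(1)] assms(2)
    by (simp add: less_eq_complex_def)
  ultimately show ?thesis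
    unfolding psd_on_def by blast
qed

lemma psd_smult:
  assumes "psd n A" and "k \<ge> 0"
  shows "psd n (complex_of_real k \<cdot>\<^sub>m A)"
proof -
  have A: "A \<in> carrier_mat n n" and "psd_on n (entries A)"
    using assms(1) unfolding psd_iff_psd_on by auto
  then have "psd_on n (\<lambda>i j. of_real k * A $$ (i,j))"
    using psd_on_scale assms(2) by blast
  then have "psd_on n (entries (complex_of_real k \<cdot>\<^sub>m A))"
    by (rule psd_on_cong[rotated]) (use A in simp)
  then show ?thesis
    unfolding psd_iff_psd_on using A by simp
qed

lemma sqnorm_nonneg: "0 \<le> sqnorm n w"
  unfolding sqnorm_def by (simp add: sum_nonneg)

lemma sqnorm_eq_0_iff: "sqnorm n w = 0 \<longleftrightarrow> (\<forall>i<n. w i = 0)"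
  unfolding sqnorm_def by (subst sum_nonneg_eq_0_iff) auto

lemma of_real_sqnorm: "of_real (sqnorm n w) = (\<Sum>i<n. cnj (w i) * w i)"
  unfolding sqnorm_def of_real_sum by (intro sum.cong refl) (metis complex_norm_square mult.commute)

lemma sesq_id_entries: "sesq n (\<lambda>i j. if i = j then c else 0) w w = c * of_real (sqnorm n w)"
  unfolding sesq_mult_vec of_real_sqnorm sum_distrib_left
  by (intro sum.cong refl) (simp add: if_distrib if_distribR sum.delta cong: if_cong)

lemma sesq_basis_left: "k < n \<Longrightarrow> sesq n M (basis_fn k) v = (\<Sum>j<n. M k j * v j)"
  unfolding sesq_mult_vec basis_fn_def by (subst sum.remove[of _ k]) auto

lemma sesq_basis_right: "k < n \<Longrightarrow> sesq n M u (basis_fn k) = (\<Sum>i<n. cnj (u i) * M i k)"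
  unfolding sesq_mult_vec basis_fn_def
  by (intro sum.cong refl) (subst sum.remove[of _ k], auto)

lemma sesq_basis: "k < n \<Longrightarrow> sesq n M (basis_fn k) (basis_fn k) = M k k"
  by (simp add: sesq_basis_left basis_fn_def sum.remove[of _ k])

lemma nonneg_quadratic_imp_linear_coeff_zero:
  fixes S Q :: real
  assumes "0 \<le> Q" and "\<And>t. 0 \<le> t * S + t\<^sup>2 * Q"
  shows "S = 0"
proof -
  define t where "t = - S / (Q + 1)"
  have "t * (Q + 1) = - S"
    using assms(1) unfolding t_def by simp
  have "(t * S + t\<^sup>2 * Q) * (Q + 1)\<^sup>2 = S * (t * (Q + 1)) * (Q + 1) + (t * (Q + 1))\<^sup>2 * Q"
    by (simp add: algebra_simps power2_eq_square)
  also have "\<dots> = - S\<^sup>2"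
    unfolding \<open>t * (Q + 1) = - S\<close> by (simp add: algebra_simps power2_eq_square)
  finally have "(t * S + t\<^sup>2 * Q) * (Q + 1)\<^sup>2 = - S\<^sup>2" .
  moreover have "0 \<le> (t * S + t\<^sup>2 * Q) * (Q + 1)\<^sup>2"
    using assms(2)[of t] by simp
  ultimately show ?thesis
    by simp
qed

text \<open>With \<open>w = M v\<close>, the form at \<open>v + t w\<close> is \<open>2 t |w|\<^sup>2 + t\<^sup>2 (w, M w)\<close> for real \<open>t\<close>.\<close>
lemma psd_on_kernel:
  assumes psd: "psd_on n M" and zero: "sesq n M v v = 0"
  shows "\<forall>i<n. (\<Sum>j<n. M i j * v j) = 0"
proof -
  define w where "w i = (\<Sum>j<n. M i j * v j)" for i
  define S where "S = sqnorm n w"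
  define Q where "Q = Re (sesq n M w w)"
  have herm: "herm_on n M"
    using psd by (rule psd_onD)
  have wv: "sesq n M w v = of_real S"
    unfolding S_def of_real_sqnorm sesq_mult_vec w_def ..
  have vw: "sesq n M v w = of_real S"
    using sesq_swap[OF herm, of v w] wv by simp
  have ww: "sesq n M w w = of_real Q"
    unfolding Q_def by (rule sesq_diag_real[OF herm, symmetric])
  have "0 \<le> Q"
    using psd_onD(2)[OF psd, of w] unfolding ww by (simp add: less_eq_complex_def)
  moreover have "0 \<le> t * (2 * S) + t\<^sup>2 * Q" for t
  proof -
    have "sesq n M (\<lambda>i. v i + of_real t * w i) (\<lambda>i. v i + of_real t * w i)
        = of_real (t * (2 * S) + t\<^sup>2 * Q)"
      unfolding sesq_expand zero wv vw ww by (simp add: algebra_simps power2_eq_square)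
    then show ?thesis
      using psd_onD(2)[OF psd, of "\<lambda>i. v i + of_real t * w i"] by (simp add: less_eq_complex_def)
  qed
  ultimately have "S = 0"
    using nonneg_quadratic_imp_linear_coeff_zero[of Q "2 * S"] by simp
  then show ?thesis
    unfolding S_def sqnorm_eq_0_iff w_def .
qed

lemma psd_on_diag_nonneg: "psd_on n M \<Longrightarrow> k < n \<Longrightarrow> 0 \<le> M k k"
  using psd_onD(2)[of n M "basis_fn k"] sesq_basis[of k n M] by simp

lemma psd_on_zero_diag:
  assumes psd: "psd_on n M" and k: "k < n" and zero: "M k k = 0" and a: "a < n"
  shows "M a k = 0" and "M k a = 0"
proof -
  have "sesq n M (basis_fn k) (basis_fn k) = 0"
    using sesq_basis[OF k] zero by simp
  then have "(\<Sum>j<n. M a j * basis_fn k j) = 0"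
    using psd_on_kernel[OF psd] a by blast
  then show "M a k = 0"
    using k unfolding basis_fn_def by (simp add: if_distrib sum.delta cong: if_cong)
  then show "M k a = 0"
    using herm_onD[OF psd_onD(1)[OF psd] a k] by simp
qed

lemma psd_on_pivot_real:
  assumes "psd_on n Y" and "i < n" and "Y i i \<noteq> 0"
  shows "Y i i = of_real (Re (Y i i))" and "0 < Re (Y i i)"
  using psd_on_diag_nonneg[OF assms(1,2)] assms(3)
  by (auto simp: less_eq_complex_def complex_eq_iff)

lemma psd_on_schur_complement:
  assumes psd: "psd_on n Y" and i: "i < n" and nz: "Y i i \<noteq> 0"
  shows "psd_on n (\<lambda>a a'. Y a a' - Y a i * Y i a' / Y i i)" (is "psd_on n ?Y'")
proof -
  define r where "r = Y i i"
  have herm: "herm_on n Y"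
    using psd by (rule psd_onD)
  have cr: "cnj r = r"
    using psd_on_pivot_real(1)[OF assms] unfolding r_def by (simp add: complex_eq_iff)
  have "r \<noteq> 0"
    using nz unfolding r_def .
  have "herm_on n ?Y'"
    unfolding herm_on_def
  proof (intro allI impI)
    fix a a'
    assume "a < n" and "a' < n"
    then show "?Y' a' a = cnj (?Y' a a')"
      using herm_onD[OF herm, of a a'] herm_onD[OF herm, of a i] herm_onD[OF herm, of i a'] i cr
      unfolding r_def by (simp add: mult.commute)
  qed
  moreover have "0 \<le> sesq n ?Y' v v" for v
  proof -
    define p where "p = (\<Sum>j<n. Y i j * v j)"
    define t where "t = p / r"
    have pv: "sesq n Y (basis_fn i) v = p" and vp: "sesq n Y v (basis_fn i) = cnj p"
      using sesq_basis_left[OF i] sesq_swap[OF herm, of v "basis_fn i"] unfolding p_def by simp_all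
    have "sesq n ?Y' v v = sesq n Y v v - (\<Sum>a<n. \<Sum>a'<n. (cnj (v a) * Y a i) * (Y i a' * v a')) / r"
      unfolding sesq_def r_def sum_divide_distrib sum_subtractf[symmetric]
      by (intro sum.cong refl) (simp add: algebra_simps)
    also have "\<dots> = sesq n Y v v - (\<Sum>a<n. cnj (v a) * Y a i) * p / r"
      by (simp only: sum_product p_def)
    also have "\<dots> = sesq n Y v v - cnj p * p / r"
      using vp sesq_basis_right[OF i, of Y v] by simp
    also have "\<dots> = sesq n Y v v + ((- t) * cnj p + cnj (- t) * p + cnj (- t) * (- t) * r)"
      using \<open>r \<noteq> 0\<close> cr unfolding t_def by (simp add: field_simps)
    also have "\<dots> = sesq n Y (\<lambda>k. v k + (- t) * basis_fn i k) (\<lambda>k. v k + (- t) * basis_fn i k)"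
      unfolding sesq_expand pv vp sesq_basis[OF i] r_def ..
    finally show ?thesis
      using psd_onD(2)[OF psd] by simp
  qed
  ultimately show ?thesis
    unfolding psd_on_def by blast
qed

lemma psd_on_pivot_rank_one:
  assumes psd: "psd_on n Y" and i: "i < n" and nz: "Y i i \<noteq> 0"
  shows "\<exists>y. \<forall>a<n. \<forall>a'<n. Y a i * Y i a' / Y i i = y a * cnj (y a')"
proof (intro exI allI impI)
  fix a a'
  assume "a < n" and "a' < n"
  define s where "s = sqrt (Re (Y i i))"
  have "of_real s * of_real s = Y i i"
    using psd_on_pivot_real[OF assms] unfolding s_def of_real_mult[symmetric] by simp
  moreover have "cnj (Y a' i) = Y i a'"
    using herm_onD[OF psd_onD(1)[OF psd] i \<open>a' < n\<close>] by simp
  ultimately show "Y a i * Y i a' / Y i i = Y a i / of_real s * cnj (Y a' i / of_real s)"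
    by simp
qed

text \<open>Gaussian elimination on a nonzero pivot strictly reduces the number of nonzero
  diagonal entries, since zero diagonal entries of a psd matrix have zero rows.\<close>
lemma psd_on_rank_one_decomp:
  "psd_on n Y \<Longrightarrow> \<exists>ys. \<forall>a<n. \<forall>a'<n. Y a a' = (\<Sum>y\<leftarrow>ys. y a * cnj (y a'))"
proof (induction "card {k. k < n \<and> Y k k \<noteq> 0}" arbitrary: Y rule: less_induct)
  case less
  show ?case
  proof (cases "\<exists>i<n. Y i i \<noteq> 0")
    case False
    then have "Y a a' = 0" if "a < n" and "a' < n" for a a'
      using psd_on_zero_diag(1)[OF less.prems that(2) _ that(1)] that by auto
    then show ?thesis
      by (intro exI[of _ "[]"]) auto
  next
    case True
    then obtain i where i: "i < n" and nz: "Y i i \<noteq> 0"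
      by blast
    define Y' where "Y' = (\<lambda>a a'. Y a a' - Y a i * Y i a' / Y i i)"
    obtain y where y: "\<forall>a<n. \<forall>a'<n. Y a i * Y i a' / Y i i = y a * cnj (y a')"
      using psd_on_pivot_rank_one[OF less.prems i nz] by blast
    have "{k. k < n \<and> Y' k k \<noteq> 0} \<subset> {k. k < n \<and> Y k k \<noteq> 0}"
    proof -
      have "Y' k k = 0" if "k < n" and "Y k k = 0" for k
        using psd_on_zero_diag(2)[OF less.prems that(1,2) i] unfolding Y'_def by (simp add: that)
      moreover have "Y' i i = 0"
        using nz unfolding Y'_def by simp
      ultimately show ?thesis
        using i nz by blast
    qed
    then have "card {k. k < n \<and> Y' k k \<noteq> 0} < card {k. k < n \<and> Y k k \<noteq> 0}"
      by (rule psubset_card_mono[rotated]) simp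
    moreover have "psd_on n Y'"
      unfolding Y'_def by (rule psd_on_schur_complement[OF less.prems i nz])
    ultimately obtain ys where "\<forall>a<n. \<forall>a'<n. Y' a a' = (\<Sum>y\<leftarrow>ys. y a * cnj (y a'))"
      using less.hyps by blast
    then show ?thesis
      using y unfolding Y'_def by (intro exI[of _ "y # ys"]) (auto simp: algebra_simps)
  qed
qed

section \<open>Weighted partial traces\<close>

text \<open>Entry \<open>(b, b')\<close> of \<open>tr\<^sub>A ((Y \<otimes> 1) R)\<close> for \<open>R\<close> on \<open>\<complex>\<^sup>n \<otimes> \<complex>\<^sup>d\<close>.\<close>
definition ptr_with :: "nat \<Rightarrow> nat \<Rightarrow> (nat \<Rightarrow> nat \<Rightarrow> complex) \<Rightarrow> (nat \<Rightarrow> nat \<Rightarrow> complex) \<Rightarrow> nat \<Rightarrow> nat \<Rightarrow> complex"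
  where "ptr_with n d R Y b b' = (\<Sum>a<n. \<Sum>a'<n. Y a a' * R (a' * d + b) (a * d + b'))"

lemma ptr_with_cong:
  "(\<And>a a'. a < n \<Longrightarrow> a' < n \<Longrightarrow> Y a a' = Y' a a') \<Longrightarrow> ptr_with n d R Y b b' = ptr_with n d R Y' b b'"
  unfolding ptr_with_def by (intro sum.cong refl) auto

lemma ptr_with_sum_list:
  "ptr_with n d R (\<lambda>a a'. \<Sum>y\<leftarrow>ys. F y a a') b b' = (\<Sum>y\<leftarrow>ys. ptr_with n d R (F y) b b')"
  by (induction ys) (simp_all add: ptr_with_def algebra_simps sum.distrib)

lemma ptr_with_sum:
  "ptr_with n d R (\<lambda>a a'. \<Sum>x<m. Y x a a') b b' = (\<Sum>x<m. ptr_with n d R (Y x) b b')"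
proof -
  have "(\<Sum>x<m. ptr_with n d R (Y x) b b') = (\<Sum>a<n. \<Sum>x<m. \<Sum>a'<n. Y x a a' * R (a' * d + b) (a * d + b'))"
    unfolding ptr_with_def by (rule sum.swap)
  also have "\<dots> = (\<Sum>a<n. \<Sum>a'<n. \<Sum>x<m. Y x a a' * R (a' * d + b) (a * d + b'))"
    by (intro sum.cong refl sum.swap)
  finally show ?thesis
    unfolding ptr_with_def by (simp add: sum_distrib_right)
qed

lemma ptr_with_diff:
  "ptr_with n d R (\<lambda>a a'. A a a' - k * B a a') b b' = ptr_with n d R A b b' - k * ptr_with n d R B b b'"
  unfolding ptr_with_def by (simp add: algebra_simps sum_subtractf sum_distrib_left)

lemma ptr_with_id_entries: "ptr_with n d R id_entries b b' = (\<Sum>a<n. R (a * d + b) (a * d + b'))"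
  unfolding ptr_with_def by (simp add: if_distrib if_distribR sum.delta cong: if_cong)

lemma sesq_mult_dim:
  "sesq (n * d) R u v
     = (\<Sum>a'<n. \<Sum>b<d. \<Sum>a<n. \<Sum>b'<d. cnj (u (a' * d + b)) * R (a' * d + b) (a * d + b') * v (a * d + b'))"
  unfolding sesq_def by (simp only: sum_lessThan_mult)

lemma ptr_with_rank_one:
  "sesq d (ptr_with n d R (\<lambda>a a'. y a * cnj (y a'))) v v
     = sesq (n * d) R (\<lambda>i. y (i div d) * v (i mod d)) (\<lambda>i. y (i div d) * v (i mod d))"
proof -
  define G where "G a' b a b' = cnj (y a' * v b) * R (a' * d + b) (a * d + b') * (y a * v b')" for a' b a b'
  have "sesq d (ptr_with n d R (\<lambda>a a'. y a * cnj (y a'))) v v = (\<Sum>b<d. \<Sum>b'<d. \<Sum>a<n. \<Sum>a'<n. G a' b a b')"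
    unfolding sesq_def ptr_with_def G_def by (simp add: sum_distrib_left sum_distrib_right mult_ac)
  also have "\<dots> = (\<Sum>b<d. \<Sum>a<n. \<Sum>b'<d. \<Sum>a'<n. G a' b a b')"
    by (intro sum.cong refl sum.swap)
  also have "\<dots> = (\<Sum>b<d. \<Sum>a<n. \<Sum>a'<n. \<Sum>b'<d. G a' b a b')"
    by (intro sum.cong refl sum.swap)
  also have "\<dots> = (\<Sum>b<d. \<Sum>a'<n. \<Sum>a<n. \<Sum>b'<d. G a' b a b')"
    by (intro sum.cong refl sum.swap)
  also have "\<dots> = (\<Sum>a'<n. \<Sum>b<d. \<Sum>a<n. \<Sum>b'<d. G a' b a b')"
    by (rule sum.swap)
  also have "\<dots> = sesq (n * d) R (\<lambda>i. y (i div d) * v (i mod d)) (\<lambda>i. y (i div d) * v (i mod d))"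
    unfolding sesq_mult_dim G_def by (intro sum.cong refl) auto
  finally show ?thesis .
qed

lemma ptr_with_herm:
  assumes Y: "herm_on n Y" and R: "herm_on (n * d) R"
  shows "herm_on d (ptr_with n d R Y)"
  unfolding herm_on_def
proof (intro allI impI)
  fix b b'
  assume b: "b < d" and b': "b' < d"
  have "cnj (ptr_with n d R Y b b') = (\<Sum>a<n. \<Sum>a'<n. Y a' a * R (a * d + b') (a' * d + b))"
    unfolding ptr_with_def cnj_sum
  proof (intro sum.cong refl)
    fix a a'
    assume "a \<in> {..<n}" and "a' \<in> {..<n}"
    then have "Y a' a = cnj (Y a a')"
      and "R (a * d + b') (a' * d + b) = cnj (R (a' * d + b) (a * d + b'))"
      using herm_onD[OF Y, of a a'] herm_onD[OF R, of "a' * d + b" "a * d + b'"]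
        mult_add_less_mult b b' by auto
    then show "cnj (Y a a' * R (a' * d + b) (a * d + b')) = Y a' a * R (a * d + b') (a' * d + b)"
      by simp
  qed
  also have "\<dots> = ptr_with n d R Y b' b"
    unfolding ptr_with_def by (rule sum.swap)
  finally show "ptr_with n d R Y b' b = cnj (ptr_with n d R Y b b')"
    by simp
qed

lemma psd_on_ptr_with:
  assumes Y: "psd_on n Y" and R: "psd_on (n * d) R"
  shows "psd_on d (ptr_with n d R Y)"
proof -
  obtain ys where ys: "\<forall>a<n. \<forall>a'<n. Y a a' = (\<Sum>y\<leftarrow>ys. y a * cnj (y a'))"
    using psd_on_rank_one_decomp[OF Y] by blast
  have sesq_eq: "sesq d (ptr_with n d R Y) v v
      = (\<Sum>y\<leftarrow>ys. sesq (n * d) R (\<lambda>i. y (i div d) * v (i mod d)) (\<lambda>i. y (i div d) * v (i mod d)))" for v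
  proof -
    have "ptr_with n d R Y = (\<lambda>b b'. \<Sum>y\<leftarrow>ys. ptr_with n d R (\<lambda>a a'. y a * cnj (y a')) b b')"
      using ys by (intro ext) (simp add: ptr_with_cong[of n Y] ptr_with_sum_list[symmetric])
    then show ?thesis
      by (simp only: sesq_sum_list_mat ptr_with_rank_one)
  qed
  have "0 \<le> sesq d (ptr_with n d R Y) v v" for v
    unfolding sesq_eq by (intro sum_list_nonneg) (use psd_onD(2)[OF R] in auto)
  then show ?thesis
    using ptr_with_herm psd_onD(1) Y R unfolding psd_on_def by blast
qed

lemma mtr_mult_blk:
  "X \<in> carrier_mat n n \<Longrightarrow> mtr (X * blk n d \<rho> b b') = ptr_with n d (entries \<rho>) (entries X) b b'"
  unfolding mtr_def ptr_with_def
  by (intro sum.cong refl) (auto simp: blk_def scalar_prod_def atLeast0LessThan intro!: sum.cong)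

definition block_diag :: "nat \<Rightarrow> (nat \<Rightarrow> nat \<Rightarrow> nat \<Rightarrow> complex) \<Rightarrow> nat \<Rightarrow> nat \<Rightarrow> complex"
  where "block_diag d G i j = (if i div d = j div d then G (i div d) (i mod d) (j mod d) else 0)"

lemma psd_on_block_diag:
  assumes G: "\<And>x. x < m \<Longrightarrow> psd_on d (G x)"
  shows "psd_on (m * d) (block_diag d G)"
proof -
  have "herm_on (m * d) (block_diag d G)"
    unfolding herm_on_def
  proof (intro allI impI)
    fix i j
    assume i: "i < m * d" and j: "j < m * d"
    then have "d > 0" and "i div d < m"
      by (cases "d = 0", auto simp: less_mult_imp_div_less)+
    then show "block_diag d G j i = cnj (block_diag d G i j)"
      using herm_onD[OF psd_onD(1)[OF G], of "i div d" "i mod d" "j mod d"]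
      unfolding block_diag_def by auto
  qed
  moreover have sesq_eq: "sesq (m * d) (block_diag d G) u u = (\<Sum>x<m. sesq d (G x) (\<lambda>b. u (x * d + b)) (\<lambda>b. u (x * d + b)))" for u
  proof -
    have const_if: "(\<Sum>b<d. if P then f b else 0) = (if P then \<Sum>b<d. f b else (0::complex))" for P f
      by simp
    have "sesq (m * d) (block_diag d G) u u
        = (\<Sum>x'<m. \<Sum>b<d. \<Sum>x<m. \<Sum>b'<d. if x' = x then cnj (u (x' * d + b)) * G x' b b' * u (x * d + b') else 0)"
      unfolding sesq_mult_dim block_diag_def by (intro sum.cong refl) auto
    also have "\<dots> = (\<Sum>x<m. sesq d (G x) (\<lambda>b. u (x * d + b)) (\<lambda>b. u (x * d + b)))"
      unfolding sesq_def const_if by (simp add: sum.delta)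
    finally show ?thesis .
  qed
  moreover have "0 \<le> sesq (m * d) (block_diag d G) u u" for u
    unfolding sesq_eq by (intro sum_nonneg) (use psd_onD(2)[OF G] in auto)
  ultimately show ?thesis
    unfolding psd_on_def by blast
qed

section \<open>The largest singular value bounds psd forms\<close>

lemma sesq_max_on_unit_sphere:
  assumes "n > 0"
  shows "\<exists>v. sqnorm n v = 1 \<and> (\<forall>w. Re (sesq n M w w) \<le> Re (sesq n M v v) * sqnorm n w)"
proof -
  define S where "S i = (if i < n then cball (0::complex) 1 else {0})" for i
  define K where "K = Pi\<^sub>E UNIV S \<inter> {v. sqnorm n v = 1}"
  have "compactin (product_topology (\<lambda>i. euclidean) UNIV) (Pi\<^sub>E UNIV S)"
    unfolding compactin_PiE by (auto simp: S_def)
  then have "compact (Pi\<^sub>E UNIV S)"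
    unfolding euclidean_product_topology by simp
  moreover have "closed {v::nat \<Rightarrow> complex. sqnorm n v = 1}"
    unfolding sqnorm_def by (intro closed_Collect_eq continuous_intros continuous_on_product_coordinates)
  ultimately have "compact K"
    unfolding K_def by (rule compact_Int_closed)
  moreover have "basis_fn 0 \<in> K"
    using assms unfolding K_def S_def sqnorm_def basis_fn_def
    by (auto simp: PiE_iff sum.remove[of _ 0])
  moreover have "continuous_on K (\<lambda>v. Re (sesq n M v v))"
    unfolding sesq_def
    by (intro continuous_intros continuous_on_subset[OF continuous_on_product_coordinates subset_UNIV])
  ultimately obtain v where vK: "v \<in> K" and max: "\<And>w. w \<in> K \<Longrightarrow> Re (sesq n M w w) \<le> Re (sesq n M v v)"
    using continuous_attains_sup[of K "\<lambda>v. Re (sesq n M v v)"] by blast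
  have "Re (sesq n M w w) \<le> Re (sesq n M v v) * sqnorm n w" for w
  proof (cases "sqnorm n w = 0")
    case True
    then have "sesq n M w w = sesq n M (\<lambda>i. 0) (\<lambda>i. 0)"
      unfolding sqnorm_eq_0_iff by (intro sesq_cong) auto
    then show ?thesis
      using True by (simp add: sesq_def)
  next
    case False
    then have N: "sqnorm n w > 0"
      using sqnorm_nonneg[of n w] by simp
    define c where "c = 1 / sqrt (sqnorm n w)"
    define w' where "w' i = (if i < n then of_real c * w i else 0)" for i
    have "sqnorm n w' = c\<^sup>2 * sqnorm n w"
      unfolding sqnorm_def w'_def sum_distrib_left
      by (intro sum.cong refl) (simp add: norm_mult power_mult_distrib)
    also have "\<dots> = 1"
      unfolding c_def using N by (simp add: power_divide)
    finally have "sqnorm n w' = 1" .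
    moreover have "w' \<in> Pi\<^sub>E UNIV S"
    proof -
      have "cmod (w' i) \<le> 1" if "i < n" for i
      proof -
        have "(cmod (w' i))\<^sup>2 \<le> sqnorm n w'"
          unfolding sqnorm_def using that by (intro member_le_sum) auto
        then have "(cmod (w' i))\<^sup>2 \<le> 1\<^sup>2"
          using \<open>sqnorm n w' = 1\<close> by simp
        then show ?thesis
          by (rule power2_le_imp_le) simp
      qed
      then show ?thesis
        unfolding S_def w'_def by (auto simp: PiE_iff)
    qed
    ultimately have "Re (sesq n M w' w') \<le> Re (sesq n M v v)"
      using max unfolding K_def by blast
    moreover have "sesq n M w' w' = of_real (c * c) * sesq n M w w"
    proof -
      have "sesq n M w' w' = sesq n M (\<lambda>i. of_real c * w i) (\<lambda>i. of_real c * w i)"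
        unfolding w'_def by (intro sesq_cong) auto
      then show ?thesis
        by (simp add: sesq_scale_left sesq_scale_right)
    qed
    ultimately have le: "c * c * Re (sesq n M w w) \<le> Re (sesq n M v v)"
      by simp
    have "c * c * sqnorm n w = 1"
      unfolding c_def using N by simp
    then have "Re (sesq n M w w) = Re (sesq n M w w) * (c * c * sqnorm n w)"
      by simp
    also have "\<dots> = c * c * Re (sesq n M w w) * sqnorm n w"
      by (simp only: mult_ac)
    also have "\<dots> \<le> Re (sesq n M v v) * sqnorm n w"
      using le N by (intro mult_right_mono) auto
    finally show ?thesis .
  qed
  then show ?thesis
    using vK unfolding K_def by blast
qed

lemma herm_on_top_eigenvector:
  assumes herm: "herm_on n M" and "n > 0"
  shows "\<exists>l v. (\<exists>k<n. v k \<noteq> 0) \<and> (\<forall>i<n. (\<Sum>j<n. M i j * v j) = of_real l * v i)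
           \<and> (\<forall>w. Re (sesq n M w w) \<le> l * sqnorm n w)"
proof -
  obtain v where v: "sqnorm n v = 1" and bound: "\<And>w. Re (sesq n M w w) \<le> Re (sesq n M v v) * sqnorm n w"
    using sesq_max_on_unit_sphere[OF \<open>n > 0\<close>] by blast
  define l where "l = Re (sesq n M v v)"
  define P where "P i j = (if i = j then of_real l else 0) - M i j" for i j
  have sesq_P: "sesq n P w w = of_real (l * sqnorm n w - Re (sesq n M w w))" for w
    unfolding P_def sesq_diff_mat using sesq_diag_real[OF herm, of w] by (simp add: sesq_id_entries)
  have "herm_on n P"
    unfolding herm_on_def
  proof (intro allI impI)
    fix i j
    assume "i < n" and "j < n"
    then have "M j i = cnj (M i j)"
      by (rule herm_onD[OF herm])
    then show "P j i = cnj (P i j)"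
      unfolding P_def by auto
  qed
  then have "psd_on n P"
    unfolding psd_on_def sesq_P using bound l_def by (simp add: less_eq_complex_def)
  moreover have "sesq n P v v = 0"
    unfolding sesq_P v l_def by simp
  ultimately have "(\<Sum>j<n. P i j * v j) = 0" if "i < n" for i
    using psd_on_kernel that by blast
  moreover have "(\<Sum>j<n. P i j * v j) = of_real l * v i - (\<Sum>j<n. M i j * v j)" if "i < n" for i
    unfolding P_def left_diff_distrib sum_subtractf using that by (subst sum.remove[of _ i]) auto
  ultimately have "\<forall>i<n. (\<Sum>j<n. M i j * v j) = of_real l * v i"
    by simp
  moreover have "\<exists>k<n. v k \<noteq> 0"
    using v sqnorm_eq_0_iff[of n v] by auto
  ultimately show ?thesis
    using bound l_def by blast
qed

lemma sesq_le_smax: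
  assumes X: "psd n X"
  shows "Re (sesq n (entries X) w w) \<le> smax X * sqnorm n w"
proof (cases "n = 0")
  case True
  then show ?thesis
    by (simp add: sesq_def sqnorm_def)
next
  case False
  have Xc: "X \<in> carrier_mat n n" and "herm_on n (entries X)" and "dagger X = X"
    using X unfolding psd_iff_psd_on psd_on_def by auto (simp add: X[unfolded psd_def])
  then obtain l v where nz: "\<exists>k<n. v k \<noteq> 0" and eig: "\<forall>i<n. (\<Sum>j<n. X $$ (i,j) * v j) = of_real l * v i"
    and bound: "\<forall>w. Re (sesq n (entries X) w w) \<le> l * sqnorm n w"
    using herm_on_top_eigenvector False by blast
  define u where "u = vec n v"
  have uc: "u \<in> carrier_vec n"
    unfolding u_def by simp
  have "u \<noteq> 0\<^sub>v n"
    using nz unfolding u_def by (metis index_vec index_zero_vec(1))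
  moreover have Xu: "X *\<^sub>v u = of_real l \<cdot>\<^sub>v u"
    using Xc eig unfolding u_def by (intro eq_vecI) (auto simp: scalar_prod_def atLeast0LessThan)
  moreover have "(X * X) *\<^sub>v u = (of_real l * of_real l) \<cdot>\<^sub>v u"
    using Xc uc by (simp add: assoc_mult_mat_vec[of X n n X n u] Xu mult_mat_vec smult_smult_assoc)
  ultimately have "eigenvalue (dagger X * X) (of_real l * of_real l)"
    unfolding eigenvalue_def eigenvector_def \<open>dagger X = X\<close> using Xc uc by (intro exI[of _ u]) auto
  moreover have "finite (Collect (eigenvalue (dagger X * X)))"
    using card_finite_spectrum(1)[of "dagger X * X" n] Xc \<open>dagger X = X\<close> unfolding spectrum_def by simp
  ultimately have "sqrt (Re (of_real l * of_real l)) \<le> smax X"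
    unfolding smax_def by (intro Max_ge finite_imageI imageI) auto
  then have "l \<le> smax X"
    by (simp flip: of_real_mult)
  then have "l * sqnorm n w \<le> smax X * sqnorm n w"
    using sqnorm_nonneg by (rule mult_right_mono)
  then show ?thesis
    using bound by (meson order_trans)
qed

section \<open>Antitonicity of a relative K-entropy in its second argument\<close>

lemma sesq_add_dim:
  "sesq (m + m') P u v = sesq m P u v + (\<Sum>i<m. \<Sum>j<m'. cnj (u i) * P i (m + j) * v (m + j))
     + (\<Sum>i<m'. \<Sum>j<m. cnj (u (m + i)) * P (m + i) j * v j)
     + sesq m' (\<lambda>i j. P (m + i) (m + j)) (\<lambda>i. u (m + i)) (\<lambda>i. v (m + i))"
  unfolding sesq_def sum_lessThan_add sum.distrib by (simp add: add_ac)

lemma psd_zero_mat: "psd n (0\<^sub>m n n)"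
  unfolding psd_iff_psd_on psd_on_def herm_on_def sesq_def by auto

lemma psd_dsum:
  assumes S: "psd n S" and T: "psd n T"
  shows "psd (n + n) (dsum S T)"
proof -
  have Sc: "S \<in> carrier_mat n n" and hS: "herm_on n (entries S)"
    and Tc: "T \<in> carrier_mat n n" and hT: "herm_on n (entries T)"
    using S T unfolding psd_iff_psd_on psd_on_def by auto
  have ent: "dsum S T $$ (i,j)
      = (if i < n then if j < n then S $$ (i,j) else 0 else if j < n then 0 else T $$ (i - n, j - n))"
    if "i < n + n" and "j < n + n" for i j
    using that Sc Tc unfolding dsum_def by simp
  have "herm_on (n + n) (entries (dsum S T))"
    unfolding herm_on_def
  proof (intro allI impI)
    fix i j
    assume i: "i < n + n" and j: "j < n + n"
    show "dsum S T $$ (j,i) = cnj (dsum S T $$ (i,j))"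
      unfolding ent[OF i j] ent[OF j i] using herm_onD[OF hS, of i j] herm_onD[OF hT, of "i - n" "j - n"] i j
      by auto
  qed
  moreover have "sesq (n + n) (entries (dsum S T)) u u
      = sesq n (entries S) u u + sesq n (entries T) (\<lambda>i. u (n + i)) (\<lambda>i. u (n + i))" for u
  proof -
    have "sesq n (entries (dsum S T)) u u = sesq n (entries S) u u"
      by (rule sesq_cong) (simp_all add: ent)
    moreover have "sesq n (\<lambda>i j. dsum S T $$ (n + i, n + j)) (\<lambda>i. u (n + i)) (\<lambda>i. u (n + i))
        = sesq n (entries T) (\<lambda>i. u (n + i)) (\<lambda>i. u (n + i))"
      by (rule sesq_cong) (simp_all add: ent)
    ultimately show ?thesis
      unfolding sesq_add_dim by (simp add: ent)
  qed
  then have "0 \<le> sesq (n + n) (entries (dsum S T)) u u" for u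
    using S T unfolding psd_iff_psd_on psd_on_def by (simp add: add_nonneg_nonneg)
  moreover have "dsum S T \<in> carrier_mat (n + n) (n + n)"
    using Sc Tc unfolding dsum_def by simp
  ultimately show ?thesis
    unfolding psd_iff_psd_on psd_on_def by blast
qed

text \<open>The partial trace over \<open>\<complex>\<^sup>2\<close> of an operator on \<open>\<complex>\<^sup>2 \<otimes> \<complex>\<^sup>n\<close>; it maps \<open>S \<oplus> T\<close> to \<open>S + T\<close>.\<close>
definition sum_diag_blocks :: "nat \<Rightarrow> complex mat \<Rightarrow> complex mat"
  where "sum_diag_blocks n M = mat n n (\<lambda>(i,j). M $$ (i,j) + M $$ (i + n, j + n))"

lemma sum_diag_blocks_dsum:
  "S \<in> carrier_mat n n \<Longrightarrow> T \<in> carrier_mat n n \<Longrightarrow> sum_diag_blocks n (dsum S T) = S + T"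
  unfolding sum_diag_blocks_def dsum_def by (intro eq_matI) auto

lemma tensor_id_sum_diag_blocks:
  assumes "P \<in> carrier_mat ((n + n) * k) ((n + n) * k)" and i: "i < n * k" and j: "j < n * k"
  shows "tensor_id (sum_diag_blocks n) (n + n) n k P $$ (i,j) = P $$ (i,j) + P $$ (n * k + i, n * k + j)"
proof -
  have "k > 0" and "i div k < n" and "j div k < n"
    using i j by (cases "k = 0", auto simp: less_mult_imp_div_less)+
  moreover have "(i div k + n) * k + i mod k = n * k + i" and "(j div k + n) * k + j mod k = n * k + j"
    by (simp_all add: algebra_simps)
  ultimately show ?thesis
    unfolding tensor_id_def sum_diag_blocks_def blk_def using i j by simp
qed

lemma psd_tensor_id_sum_diag_blocks:
  assumes "psd ((n + n) * k) P"
  shows "psd (n * k) (tensor_id (sum_diag_blocks n) (n + n) n k P)" (is "psd _ ?Q")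
proof -
  define m where "m = n * k"
  have "(n + n) * k = m + m"
    unfolding m_def by (simp add: algebra_simps)
  then have Pc: "P \<in> carrier_mat (m + m) (m + m)" and P: "psd_on (m + m) (entries P)"
    using assms unfolding psd_iff_psd_on by auto
  have ent: "?Q $$ (i,j) = P $$ (i,j) + P $$ (m + i, m + j)" if "i < m" and "j < m" for i j
    using tensor_id_sum_diag_blocks assms that unfolding m_def psd_iff_psd_on by blast
  have "herm_on m (entries ?Q)"
    unfolding herm_on_def
  proof (intro allI impI)
    fix i j
    assume "i < m" and "j < m"
    then show "?Q $$ (j,i) = cnj (?Q $$ (i,j))"
      using herm_onD[OF psd_onD(1)[OF P], of i j] herm_onD[OF psd_onD(1)[OF P], of "m + i" "m + j"] ent
      by simp
  qed
  moreover have "0 \<le> sesq m (entries ?Q) u u" for u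
  proof -
    define u1 where "u1 i = (if i < m then u i else 0)" for i
    define u2 where "u2 i = (if i < m then 0 else u (i - m))" for i
    have "sesq m (entries ?Q) u u = sesq m (entries P) u u + sesq m (\<lambda>i j. P $$ (m + i, m + j)) u u"
      unfolding sesq_def by (simp add: ent algebra_simps sum.distrib)
    also have "sesq m (entries P) u u = sesq (m + m) (entries P) u1 u1"
      unfolding sesq_add_dim by (simp add: u1_def sesq_def)
    also have "sesq m (\<lambda>i j. P $$ (m + i, m + j)) u u = sesq (m + m) (entries P) u2 u2"
      unfolding sesq_add_dim by (simp add: u2_def sesq_def)
    finally show ?thesis
      using psd_onD(2)[OF P] by (simp add: add_nonneg_nonneg)
  qed
  moreover have "?Q \<in> carrier_mat m m"
    unfolding tensor_id_def m_def by simp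
  ultimately show ?thesis
    unfolding psd_iff_psd_on psd_on_def m_def by blast
qed

lemma tpcpm_sum_diag_blocks: "tpcpm (n + n) n (sum_diag_blocks n)"
proof -
  have "mtr (sum_diag_blocks n A) = mtr A" if "A \<in> carrier_mat (n + n) (n + n)" for A
  proof -
    have "mtr (sum_diag_blocks n A) = (\<Sum>i<n. A $$ (i,i) + A $$ (n + i, n + i))"
      unfolding mtr_def sum_diag_blocks_def by (simp add: add.commute)
    also have "\<dots> = (\<Sum>i<n + n. A $$ (i,i))"
      by (simp only: sum_lessThan_add sum.distrib)
    also have "\<dots> = mtr A"
      using that by (simp add: mtr_def)
    finally show ?thesis .
  qed
  moreover have "sum_diag_blocks n (A + B) = sum_diag_blocks n A + sum_diag_blocks n B"
    if "A \<in> carrier_mat (n + n) (n + n)" and "B \<in> carrier_mat (n + n) (n + n)" for A B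
    using that unfolding sum_diag_blocks_def by (intro eq_matI) auto
  moreover have "sum_diag_blocks n (c \<cdot>\<^sub>m A) = c \<cdot>\<^sub>m sum_diag_blocks n A"
    if "A \<in> carrier_mat (n + n) (n + n)" for A c
    using that unfolding sum_diag_blocks_def by (intro eq_matI) (auto simp: algebra_simps)
  ultimately show ?thesis
    unfolding tpcpm_def using psd_tensor_id_sum_diag_blocks by (simp add: sum_diag_blocks_def)
qed

lemma rel_K_entropy_antimono:
  assumes D: "rel_K_entropy b D" and S: "psd n S" and T: "psd n T" and T': "psd n T'"
    and le: "psd n (T' - T)"
  shows "D S T' \<le> D S T"
proof -
  have Sc: "S \<in> carrier_mat n n" and Tc: "T \<in> carrier_mat n n" and T'c: "T' \<in> carrier_mat n n"
    using S T T' unfolding psd_iff_psd_on by auto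
  have "T + (T' - T) = T'"
    using Tc T'c by (intro eq_matI) auto
  then have "D S T' = D (sum_diag_blocks n (dsum S (0\<^sub>m n n))) (sum_diag_blocks n (dsum T (T' - T)))"
    using Sc Tc T'c by (simp add: sum_diag_blocks_dsum minus_carrier_mat)
  also have "\<dots> \<le> D (dsum S (0\<^sub>m n n)) (dsum T (T' - T))"
    using D tpcpm_sum_diag_blocks psd_dsum[OF S psd_zero_mat] psd_dsum[OF T le]
    unfolding rel_K_entropy_def by blast
  also have "\<dots> = D S T"
    using D S T le unfolding rel_K_entropy_def by blast
  finally show ?thesis .
qed

lemma rel_K_entropy_le_log:
  assumes D: "rel_K_entropy b D" and R: "density n R" and T: "psd n T" and "c > 0"
    and le: "psd n (T - complex_of_real (1 / c) \<cdot>\<^sub>m R)"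
  shows "D R T \<le> ereal (log b c)"
proof -
  have "psd n R" and "0 < 1 / c"
    using R \<open>c > 0\<close> unfolding density_def by simp_all
  then have cR: "psd n (complex_of_real (1 / c) \<cdot>\<^sub>m R)"
    by (intro psd_smult) auto
  have "D R T \<le> D R (complex_of_real (1 / c) \<cdot>\<^sub>m R)"
    by (rule rel_K_entropy_antimono[OF D \<open>psd n R\<close> cR T le])
  also have "\<dots> = D R R + ereal (log b (1 / (1 / c)))"
    using D \<open>psd n R\<close> \<open>0 < 1 / c\<close> unfolding rel_K_entropy_def by blast
  also have "\<dots> = ereal (log b c)"
    using D R unfolding rel_K_entropy_def by simp
  finally show ?thesis .
qed

section \<open>Partial traces and the post-measurement state\<close>

lemma ptrA_entries:
  "b < d \<Longrightarrow> b' < d \<Longrightarrow> ptrA n d A $$ (b,b') = ptr_with n d (entries A) id_entries b b'"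
  unfolding ptrA_def ptr_with_id_entries by simp

lemma psd_ptrA:
  assumes "psd (n * d) A"
  shows "psd d (ptrA n d A)"
proof -
  have "psd_on n id_entries"
    unfolding psd_on_def herm_on_def
    using sesq_id_entries[of n 1] by (simp add: sqnorm_nonneg less_eq_complex_def)
  then have "psd_on d (ptr_with n d (entries A) id_entries)"
    using assms unfolding psd_iff_psd_on by (blast intro: psd_on_ptr_with)
  then have "psd_on d (entries (ptrA n d A))"
    by (rule psd_on_cong[rotated]) (simp add: ptrA_entries)
  then show ?thesis
    unfolding psd_iff_psd_on by (simp add: ptrA_def)
qed

lemma mtr_ptrA:
  assumes "A \<in> carrier_mat (n * d) (n * d)"
  shows "mtr (ptrA n d A) = mtr A"
proof -
  have "mtr (ptrA n d A) = (\<Sum>b<d. \<Sum>a<n. A $$ (a * d + b, a * d + b))"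
    unfolding mtr_def ptrA_def by simp
  also have "\<dots> = (\<Sum>a<n. \<Sum>b<d. A $$ (a * d + b, a * d + b))"
    by (rule sum.swap)
  also have "\<dots> = mtr A"
    using assms by (simp add: mtr_def sum_lessThan_mult[of "\<lambda>i. A $$ (i,i)"])
  finally show ?thesis .
qed

lemma density_ptrA:
  assumes "density (n * d) A"
  shows "density d (ptrA n d A)"
proof -
  have "psd (n * d) A" and "mtr A = 1"
    using assms unfolding density_def by simp_all
  moreover have "A \<in> carrier_mat (n * d) (n * d)"
    using \<open>psd (n * d) A\<close> unfolding psd_iff_psd_on by simp
  ultimately show ?thesis
    unfolding density_def by (simp add: psd_ptrA mtr_ptrA)
qed

lemma density_dim_pos: "density n A \<Longrightarrow> 0 < n"
  unfolding density_def psd_def mtr_def by (cases "n = 0") auto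

lemma kron_one_mat_entries:
  assumes "\<sigma> \<in> carrier_mat d d" and "i < m * d" and "j < m * d"
  shows "kron (1\<^sub>m m) \<sigma> $$ (i,j) = block_diag d (\<lambda>_. entries \<sigma>) i j"
proof -
  have "i div d < m" and "j div d < m" and "0 < d"
    using assms(2,3) by (cases "d = 0", auto simp: less_mult_imp_div_less)+
  then show ?thesis
    unfolding kron_def block_diag_def using assms by simp
qed

lemma psd_kron_one_mat:
  assumes "psd d \<sigma>"
  shows "psd (m * d) (kron (1\<^sub>m m) \<sigma>)"
proof -
  have \<sigma>: "\<sigma> \<in> carrier_mat d d" and "psd_on d (entries \<sigma>)"
    using assms unfolding psd_iff_psd_on by auto
  then have "psd_on (m * d) (block_diag d (\<lambda>_. entries \<sigma>))"
    by (intro psd_on_block_diag)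
  then have "psd_on (m * d) (entries (kron (1\<^sub>m m) \<sigma>))"
    by (rule psd_on_cong[rotated]) (simp add: kron_one_mat_entries[OF \<sigma>])
  then show ?thesis
    unfolding psd_iff_psd_on using \<sigma> by (simp add: kron_def)
qed

abbreviation meas_state :: "complex mat list \<Rightarrow> nat \<Rightarrow> nat \<Rightarrow> complex mat \<Rightarrow> complex mat"
  where "meas_state Xs n d \<rho> \<equiv> tensor_id (meas_map Xs) n (length Xs) d \<rho>"

lemma meas_state_entries:
  assumes "\<forall>X\<in>set Xs. X \<in> carrier_mat n n" and "i < length Xs * d" and "j < length Xs * d"
  shows "meas_state Xs n d \<rho> $$ (i,j) = block_diag d (\<lambda>x. ptr_with n d (entries \<rho>) (entries (Xs ! x))) i j"
proof -
  have "i div d < length Xs" and "j div d < length Xs"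
    using assms(2,3) by (simp_all add: less_mult_imp_div_less)
  then show ?thesis
    unfolding tensor_id_def meas_map_def block_diag_def using assms by (simp add: mtr_mult_blk)
qed

lemma psd_meas_state:
  assumes "\<forall>X\<in>set Xs. psd n X" and "psd (n * d) \<rho>"
  shows "psd (length Xs * d) (meas_state Xs n d \<rho>)"
proof -
  have "psd_on (length Xs * d) (block_diag d (\<lambda>x. ptr_with n d (entries \<rho>) (entries (Xs ! x))))"
    using assms unfolding psd_iff_psd_on by (intro psd_on_block_diag psd_on_ptr_with) auto
  then have "psd_on (length Xs * d) (entries (meas_state Xs n d \<rho>))"
    by (rule psd_on_cong[rotated]) (use assms meas_state_entries psd_iff_psd_on in metis)
  then show ?thesis
    unfolding psd_iff_psd_on by (simp add: tensor_id_def)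
qed

lemma povm_sum_entries:
  assumes "povm n Xs" and "a < n" and "a' < n"
  shows "(\<Sum>x<length Xs. Xs ! x $$ (a,a')) = id_entries a a'"
proof -
  have "mat n n (\<lambda>ij. \<Sum>x<length Xs. Xs ! x $$ ij) $$ (a,a') = 1\<^sub>m n $$ (a,a')"
    using assms(1) unfolding povm_def by simp
  then show ?thesis
    using assms(2,3) by simp
qed

lemma ptrA_meas_state:
  assumes "povm n Xs"
  shows "ptrA (length Xs) d (meas_state Xs n d \<rho>) = ptrA n d \<rho>"
proof (rule eq_matI)
  fix b b'
  assume "b < dim_row (ptrA n d \<rho>)" and "b' < dim_col (ptrA n d \<rho>)"
  then have b: "b < d" and b': "b' < d"
    unfolding ptrA_def by simp_all
  have car: "\<forall>X\<in>set Xs. X \<in> carrier_mat n n"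
    using assms unfolding povm_def psd_iff_psd_on by blast
  have "ptrA (length Xs) d (meas_state Xs n d \<rho>) $$ (b,b')
      = (\<Sum>x<length Xs. ptr_with n d (entries \<rho>) (entries (Xs ! x)) b b')"
    unfolding ptrA_def using b b' mult_add_less_mult[of _ "length Xs" b d] mult_add_less_mult[of _ "length Xs" b' d]
    by (auto simp: meas_state_entries[OF car] block_diag_def intro!: sum.cong)
  also have "\<dots> = ptr_with n d (entries \<rho>) id_entries b b'"
    unfolding ptr_with_sum[symmetric] using povm_sum_entries[OF assms] by (intro ptr_with_cong) auto
  also have "\<dots> = ptrA n d \<rho> $$ (b,b')"
    using b b' by (simp add: ptrA_entries)
  finally show "ptrA (length Xs) d (meas_state Xs n d \<rho>) $$ (b,b') = ptrA n d \<rho> $$ (b,b')" .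
qed (simp_all add: ptrA_def)

lemma density_meas_state:
  assumes "povm n Xs" and "density (n * d) \<rho>"
  shows "density (length Xs * d) (meas_state Xs n d \<rho>)"
proof -
  have "psd (length Xs * d) (meas_state Xs n d \<rho>)"
    using assms unfolding povm_def density_def by (intro psd_meas_state) auto
  moreover have "mtr (meas_state Xs n d \<rho>) = mtr \<rho>"
  proof -
    have "mtr (meas_state Xs n d \<rho>) = mtr (ptrA (length Xs) d (meas_state Xs n d \<rho>))"
      by (rule mtr_ptrA[symmetric]) (simp add: tensor_id_def)
    also have "\<dots> = mtr (ptrA n d \<rho>)"
      unfolding ptrA_meas_state[OF assms(1)] ..
    also have "\<dots> = mtr \<rho>"
      using assms(2) unfolding density_def psd_iff_psd_on by (blast intro: mtr_ptrA)
    finally show ?thesis .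
  qed
  ultimately show ?thesis
    using assms(2) unfolding density_def by simp
qed

section \<open>The post-measurement state is dominated by \<open>c(X) (1 \<otimes> \<rho>\<^sub>B)\<close>\<close>

lemma sqnorm_basis_fn: "k < n \<Longrightarrow> sqnorm n (basis_fn k) = 1"
  unfolding sqnorm_def basis_fn_def by (subst sum.remove[of _ k]) auto

lemma smax_le_cX: "X \<in> set Xs \<Longrightarrow> smax X \<le> cX Xs"
  unfolding cX_def by (intro Max_ge) auto

lemma cX_pos:
  assumes povm: "povm n Xs" and "0 < n"
  shows "0 < cX Xs"
proof (rule ccontr)
  assume "\<not> 0 < cX Xs"
  have "Re (Xs ! x $$ (0,0)) \<le> 0" if "x < length Xs" for x
  proof -
    have "psd n (Xs ! x)"
      using povm that unfolding povm_def by simp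
    then have "Re (Xs ! x $$ (0,0)) \<le> smax (Xs ! x)"
      using sesq_le_smax[of n "Xs ! x" "basis_fn 0"] sesq_basis[OF \<open>0 < n\<close>] sqnorm_basis_fn[OF \<open>0 < n\<close>]
      by simp
    also have "\<dots> \<le> cX Xs"
      using that by (simp add: smax_le_cX)
    finally show ?thesis
      using \<open>\<not> 0 < cX Xs\<close> by simp
  qed
  then have "(\<Sum>x<length Xs. Re (Xs ! x $$ (0,0))) \<le> 0"
    by (intro sum_nonpos) auto
  moreover have "(\<Sum>x<length Xs. Re (Xs ! x $$ (0,0))) = 1"
    using povm_sum_entries[OF povm \<open>0 < n\<close> \<open>0 < n\<close>] by (simp flip: Re_sum)
  ultimately show False
    by simp
qed

lemma psd_on_id_minus_scaled:
  assumes X: "psd n X" and "0 < c" and "smax X \<le> c"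
  shows "psd_on n (\<lambda>a a'. id_entries a a' - of_real (1 / c) * X $$ (a,a'))" (is "psd_on n ?Y")
proof -
  have herm: "herm_on n (entries X)"
    using X unfolding psd_iff_psd_on psd_on_def by simp
  have "herm_on n ?Y"
    unfolding herm_on_def
  proof (intro allI impI)
    fix a a'
    assume "a < n" and "a' < n"
    then have "X $$ (a',a) = cnj (X $$ (a,a'))"
      by (rule herm_onD[OF herm])
    then show "?Y a' a = cnj (?Y a a')"
      by auto
  qed
  moreover have "0 \<le> sesq n ?Y u u" for u
  proof -
    have "Re (sesq n (entries X) u u) \<le> c * sqnorm n u"
      using sesq_le_smax[OF X] \<open>smax X \<le> c\<close> sqnorm_nonneg
      by (meson mult_right_mono order_trans)
    then have "Re (sesq n (entries X) u u) / c \<le> sqnorm n u"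
      using \<open>0 < c\<close> by (simp add: divide_le_eq mult.commute)
    moreover have "sesq n ?Y u u = of_real (sqnorm n u - Re (sesq n (entries X) u u) / c)"
      unfolding sesq_diff_mat sesq_scale_mat using sesq_diag_real[OF herm, of u]
      by (simp add: sesq_id_entries)
    ultimately show ?thesis
      by (simp add: less_eq_complex_def)
  qed
  ultimately show ?thesis
    unfolding psd_on_def by blast
qed

lemma meas_state_le_kron_ptrA:
  assumes povm: "povm n Xs" and \<rho>: "psd (n * d) \<rho>" and "0 < c" and "\<forall>X\<in>set Xs. smax X \<le> c"
  shows "psd (length Xs * d) (kron (1\<^sub>m (length Xs)) (ptrA n d \<rho>) - of_real (1 / c) \<cdot>\<^sub>m meas_state Xs n d \<rho>)"
    (is "psd _ ?T")
proof -
  define m where "m = length Xs"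
  have X: "psd n (Xs ! x)" if "x < m" for x
    using povm that unfolding povm_def m_def by simp
  have car: "\<forall>X\<in>set Xs. X \<in> carrier_mat n n"
    using povm unfolding povm_def psd_iff_psd_on by blast
  let ?G = "\<lambda>x. ptr_with n d (entries \<rho>) (\<lambda>a a'. id_entries a a' - of_real (1 / c) * Xs ! x $$ (a,a'))"
  have block: "psd_on (m * d) (block_diag d ?G)"
    using \<rho> X psd_on_id_minus_scaled[OF X \<open>0 < c\<close>] assms(4) unfolding psd_iff_psd_on m_def
    by (intro psd_on_block_diag psd_on_ptr_with) auto
  have Kc: "kron (1\<^sub>m m) (ptrA n d \<rho>) \<in> carrier_mat (m * d) (m * d)"
    and Rc: "meas_state Xs n d \<rho> \<in> carrier_mat (m * d) (m * d)"
    unfolding kron_def ptrA_def tensor_id_def m_def by simp_all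
  have eq: "?T $$ (i,j) = block_diag d ?G i j" if "i < m * d" and "j < m * d" for i j
  proof -
    have "?T $$ (i,j) = kron (1\<^sub>m m) (ptrA n d \<rho>) $$ (i,j) - of_real (1 / c) * meas_state Xs n d \<rho> $$ (i,j)"
      using that Kc Rc unfolding m_def by simp
    also have "\<dots> = block_diag d (\<lambda>_. entries (ptrA n d \<rho>)) i j
        - of_real (1 / c) * block_diag d (\<lambda>x. ptr_with n d (entries \<rho>) (entries (Xs ! x))) i j"
      using that unfolding m_def by (simp add: kron_one_mat_entries ptrA_def meas_state_entries[OF car])
    also have "\<dots> = block_diag d ?G i j"
    proof -
      have "0 < d"
        using that by (cases "d = 0") auto
      then show ?thesis
        unfolding block_diag_def ptr_with_diff by (simp add: ptrA_entries)
    qed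
    finally show ?thesis .
  qed
  have "psd_on (m * d) (entries ?T)"
    by (rule psd_on_cong[OF _ block]) (simp only: eq)
  moreover have "?T \<in> carrier_mat (m * d) (m * d)"
    using Kc Rc unfolding m_def by (intro minus_carrier_mat smult_carrier_mat)
  ultimately show ?thesis
    unfolding psd_iff_psd_on m_def by simp
qed

lemma H_K1_le_H_K2: "density (m * d) R \<Longrightarrow> H_K1 D m d R \<le> H_K2 D m d R"
  unfolding H_K1_def H_K2_def by (rule SUP_upper) (simp add: density_ptrA)

theorem lemma2:
  fixes b :: real and D :: "complex mat \<Rightarrow> complex mat \<Rightarrow> ereal"
    and dA dB :: nat and Xs :: "complex mat list" and \<rho> :: "complex mat"
  assumes "0 < b" and "b \<noteq> 1"
    and "rel_K_entropy b D"
    and "povm dA Xs"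
    and "density (dA * dB) \<rho>"
  shows "H_K1 D (length Xs) dB (tensor_id (meas_map Xs) dA (length Xs) dB \<rho>)
           \<ge> ereal (log b (1 / cX Xs)) \<and>
         H_K2 D (length Xs) dB (tensor_id (meas_map Xs) dA (length Xs) dB \<rho>)
           \<ge> ereal (log b (1 / cX Xs))"
proof -
  note D = assms(3) and povm = assms(4) and \<rho> = assms(5)
  define R where "R = meas_state Xs dA dB \<rho>"
  have "psd (dA * dB) \<rho>" and "0 < dA"
    using \<rho> density_dim_pos[OF \<rho>] unfolding density_def by simp_all
  have c: "0 < cX Xs"
    using cX_pos[OF povm \<open>0 < dA\<close>] .
  have R: "density (length Xs * dB) R"
    unfolding R_def using povm \<rho> by (rule density_meas_state)
  have "D R (kron (1\<^sub>m (length Xs)) (ptrA (length Xs) dB R)) \<le> ereal (log b (cX Xs))"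
    unfolding R_def ptrA_meas_state[OF povm]
    using D R[unfolded R_def] psd_kron_one_mat[OF psd_ptrA[OF \<open>psd (dA * dB) \<rho>\<close>]] c
      meas_state_le_kron_ptrA[OF povm \<open>psd (dA * dB) \<rho>\<close> c] smax_le_cX
    by (blast intro: rel_K_entropy_le_log)
  then have "ereal (log b (1 / cX Xs)) \<le> H_K1 D (length Xs) dB R"
    unfolding H_K1_def using c by (simp add: log_def ln_div ereal_minus_le_minus flip: uminus_ereal.simps)
  moreover have "H_K1 D (length Xs) dB R \<le> H_K2 D (length Xs) dB R"
    by (rule H_K1_le_H_K2[OF R])
  ultimately show ?thesis
    unfolding R_def by (blast intro: order_trans)
qed

end
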